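(* Let $N=1$ (a single qubit, so the qubit string is omitted and we write $\mathbf{T}^{(k)}_{\mu}(\vec n)$). Let $k\ge 3$, let $\vec n=(n_1,\dots,n_k)$ be a window string with $L\ge n_1\ge\cdots\ge n_k\ge 1$, and let $\mu=(\mu_1,\dots,\mu_{k-1})\in\{0,1\}^{k-1}$. Suppose $\vec n$ contains a "3-streak", i.e. there is an index $i$ with $2\le i\le k-1$ and $n_{i-1}=n_i=n_{i+1}$. Let $\vec n'$ be the length-$(k-2)$ string obtained from $\vec n$ by deleting the entries $n_{i-1}$ and $n_i$, and let $\mu'\in\{0,1\}^{k-3}$ be obtained from $\mu$ by deleting its $(i-1)$-th and $i$-th entries. Then there is a scalar $c$, depending only on $k$, $i$ and $\mu$ (and not on the unitaries $U_1,\dots,U_L$ nor on $\tilde O$), such that $$\mathbf{T}^{(k)}_{\mu}(\vec n)=c\,\mathbf{T}^{(k-2)}_{\mu'}(\vec n').$$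
   Context: Fix integers $L\ge 1$ and $N\ge 1$, and a set $Q$ of $N$ qubit labels. For $q\in Q$ let $\sigma_z^{[q]}$ denote the Pauli-$Z$ operator acting on qubit $q$ tensored with the identity on all other qubits of $(\mathbb{C}^2)^{\otimes N}$. (Digital control) Let $U_1,\dots,U_L$ be arbitrary unitaries on $(\mathbb{C}^2)^{\otimes N}$ ($U_n$ is the control propagator, constant on the $n$-th time window), and let $\tilde O$ be an arbitrary Hermitian unitary operator on $(\mathbb{C}^2)^{\otimes N}$ (the toggling-frame observable). For $q\in Q$ and $n\in\{1,\dots,L\}$ define $\tilde h_q(n)=U_n^\dagger\sigma_z^{[q]}U_n$ and $\bar h_q(n)=-\tilde O^{-1}\tilde h_q(n)\tilde O$. For $k\ge1$, a window string $\vec n=(n_1,\dots,n_k)$ with $L\ge n_1\ge\cdots\ge n_k\ge1$, a qubit string $\vec q=(q_1,\dots,q_k)\in Q^k$ and a sign string $\mu\in\{0,1\}^{k-1}$, the (window-framed) control tensor is $$\mathbf{T}^{(k)}_{\vec q;\mu}(\vec n)=\sum_{b\in\{0,1\}^k}(-1)^{\sum_{j=1}^{k-1}\mu_j b_{j+1}}\Big(\prod^{\downarrow}_{i:\,b_i=1}\bar h_{q_i}(n_i)\Big)\Big(\prod^{\uparrow}_{i:\,b_i=0}\tilde h_{q_i}(n_i)\Big),$$ where $\prod^{\downarrow}$ is the ordered product with the index $i$ decreasing from left to right, $\prod^{\uparrow}$ is the ordered product with $i$ increasing from left to right, and an empty product is the identity. When $N=1$ the qubit string is omitted and we write $\mathbf{T}^{(k)}_{\mu}(\vec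 n)$. *)

theory Defs
  imports "HOL-Analysis.Analysis"
begin

type_synonym qmat = "complex^2^2"

definition adj :: "qmat \<Rightarrow> qmat" where
  "adj A = (\<chi> i j. cnj (A $ j $ i))"

definition unitary2 :: "qmat \<Rightarrow> bool" where
  "unitary2 A \<longleftrightarrow> adj A ** A = mat 1 \<and> A ** adj A = mat 1"

definition hermitian2 :: "qmat \<Rightarrow> bool" where
  "hermitian2 A \<longleftrightarrow> adj A = A"

definition sigz :: qmat where
  "sigz = (\<chi> i j. if i = j then (if i = 0 then 1 else -1) else 0)"

definition msc :: "complex \<Rightarrow> qmat \<Rightarrow> qmat" where
  "msc c M = (\<chi> i j. c * M $ i $ j)"

definition mprod :: "qmat list \<Rightarrow> qmat" where
  "mprod xs = foldr (**) xs (mat 1)"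

definition htil :: "(nat \<Rightarrow> qmat) \<Rightarrow> nat \<Rightarrow> qmat" where
  "htil U n = adj (U n) ** sigz ** U n"

definition hbar :: "(nat \<Rightarrow> qmat) \<Rightarrow> qmat \<Rightarrow> nat \<Rightarrow> qmat" where
  "hbar U Ot n = - (matrix_inv Ot ** htil U n ** Ot)"

text \<open>Window-framed control tensor T^{(k)}_mu(ns), k = length ns; lists are 0-indexed,
  so ns!j = n_{j+1}, mu!j = mu_{j+1}, bs!j = b_{j+1}.\<close>
definition ctrl_tensor :: "(nat \<Rightarrow> qmat) \<Rightarrow> qmat \<Rightarrow> bool list \<Rightarrow> nat list \<Rightarrow> qmat" where
  "ctrl_tensor U Ot mu ns =
     (\<Sum>bs\<in>{bs::bool list. length bs = length ns}.
        msc ((-1) ^ (\<Sum>j<length ns - 1. of_bool (mu ! j \<and> bs ! (j+1))))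
          (mprod (rev [hbar U Ot (ns ! j). j \<leftarrow> [0..<length ns], bs ! j])
           ** mprod [htil U (ns ! j). j \<leftarrow> [0..<length ns], \<not> bs ! j]))"

definition window_string :: "nat \<Rightarrow> nat list \<Rightarrow> bool" where
  "window_string L ns \<longleftrightarrow> (\<forall>x\<in>set ns. 1 \<le> x \<and> x \<le> L) \<and>
     (\<forall>j. Suc j < length ns \<longrightarrow> ns ! Suc j \<le> ns ! j)"

text \<open>Delete the (i-1)-th and i-th entries (1-indexed) of a list.\<close>
definition del2 :: "nat \<Rightarrow> 'a list \<Rightarrow> 'a list" where
  "del2 i xs = take (i - 2) xs @ drop i xs"

end

theory Submission
  imports Defs
begin

(* Summing first over the last bit of b shows that the control tensor arises from the identity
   by the steps X \<mapsto> X htil(n_j) + s_j hbar(n_j) X, one for each window, with signs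
   s_j = (-1)^(mu_(j-1)). Both htil and hbar are involutions, so three consecutive steps with the
   same window collapse: on expanding them every product with a repeated factor reduces, leaving
   (1 + s_1 s_2 + s_1 s_3 + s_2 s_3) times the first of the three steps. The later steps are linear,
   so this scalar passes through them unchanged. *)

lemma matrix_add_rdistrib: "(B + C) ** A = B ** A + C ** A"
  by (vector matrix_matrix_mult_def sum.distrib[symmetric] field_simps)

lemma matrix_mul_lneg: "(- A) ** (B :: 'a::ring_1^'n^'m) = - (A ** B)"
  by (simp add: matrix_matrix_mult_def vec_eq_iff sum_negf)

lemma matrix_mul_rneg: "A ** (- B :: 'a::ring_1^'n^'m) = - (A ** B)"
  by (simp add: matrix_matrix_mult_def vec_eq_iff sum_negf)

lemma sum_matrix_mult: "(\<Sum>x\<in>S. f x) ** A = (\<Sum>x\<in>S. f x ** A)"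
  by (induction S rule: infinite_finite_induct) (auto simp: matrix_add_rdistrib)

lemma matrix_mult_sum: "A ** (\<Sum>x\<in>S. f x) = (\<Sum>x\<in>S. A ** f x)"
  by (induction S rule: infinite_finite_induct) (auto simp: matrix_add_ldistrib)

lemma matrix_inv_right: "invertible A \<Longrightarrow> A ** matrix_inv A = mat 1"
  unfolding invertible_def matrix_inv_def by (rule someI2_ex) auto

lemma matrix_inv_left: "invertible A \<Longrightarrow> matrix_inv A ** A = mat 1"
  unfolding invertible_def matrix_inv_def by (rule someI2_ex) auto

lemma conj_involution:
  fixes M P Q :: "'a::semiring_1^'n^'n"
  assumes "P ** Q = mat 1" and "M ** M = mat 1"
  shows "(Q ** M ** P) ** (Q ** M ** P) = Q ** P"
proof -
  have "(Q ** M ** P) ** (Q ** M ** P) = Q ** M ** (P ** Q) ** M ** P"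
    by (simp add: matrix_mul_assoc)
  then show ?thesis
    using assms by (simp add: matrix_mul_assoc[symmetric])
qed

lemma msc_mult_left [simp]: "msc c X ** Y = msc c (X ** Y)"
  by (simp add: msc_def matrix_matrix_mult_def vec_eq_iff sum_distrib_left mult.assoc)

lemma msc_mult_right [simp]: "X ** msc c Y = msc c (X ** Y)"
  by (simp add: msc_def matrix_matrix_mult_def vec_eq_iff sum_distrib_left mult.left_commute)

lemma msc_add: "msc c (X + Y) = msc c X + msc c Y"
  by (simp add: msc_def vec_eq_iff distrib_left)

lemma msc_msc [simp]: "msc c (msc d X) = msc (c * d) X"
  by (simp add: msc_def vec_eq_iff mult.assoc)

lemma msc_sum: "msc c (\<Sum>x\<in>S. f x) = (\<Sum>x\<in>S. msc c (f x))"
  by (induction S rule: infinite_finite_induct) (auto simp: msc_add msc_def vec_eq_iff distrib_left)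

lemma msc_one [simp]: "msc 1 X = X"
  by (simp add: msc_def vec_eq_iff)

lemma mprod_Nil [simp]: "mprod [] = mat 1"
  by (simp add: mprod_def)

lemma mprod_Cons [simp]: "mprod (x # xs) = x ** mprod xs"
  by (simp add: mprod_def)

lemma mprod_append [simp]: "mprod (xs @ ys) = mprod xs ** mprod ys"
  by (induction xs) (auto simp: matrix_mul_assoc)

definition signb :: "bool \<Rightarrow> complex" where
  "signb e = (if e then -1 else 1)"

definition triple_factor :: "bool \<Rightarrow> bool \<Rightarrow> bool \<Rightarrow> complex" where
  "triple_factor e\<^sub>1 e\<^sub>2 e\<^sub>3 = 1 + signb e\<^sub>1 * signb e\<^sub>2 + signb e\<^sub>1 * signb e\<^sub>3 + signb e\<^sub>2 * signb e\<^sub>3"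

definition ctrl_step :: "bool \<Rightarrow> qmat \<Rightarrow> qmat \<Rightarrow> qmat \<Rightarrow> qmat" where
  "ctrl_step e A B X = X ** A + msc (signb e) (B ** X)"

primrec ctrl_chain :: "(nat \<Rightarrow> bool) \<Rightarrow> (nat \<Rightarrow> qmat) \<Rightarrow> (nat \<Rightarrow> qmat) \<Rightarrow> nat \<Rightarrow> qmat" where
  "ctrl_chain e A B 0 = mat 1"
| "ctrl_chain e A B (Suc n) = ctrl_step (e n) (A n) (B n) (ctrl_chain e A B n)"

definition ctrl_term :: "(nat \<Rightarrow> bool) \<Rightarrow> (nat \<Rightarrow> qmat) \<Rightarrow> (nat \<Rightarrow> qmat) \<Rightarrow> bool list \<Rightarrow> qmat" where
  "ctrl_term e A B bs =
     msc ((-1) ^ (\<Sum>j<length bs. of_bool (e j \<and> bs ! j)))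
       (mprod (rev [B j. j \<leftarrow> [0..<length bs], bs ! j])
        ** mprod [A j. j \<leftarrow> [0..<length bs], \<not> bs ! j])"

lemma ctrl_term_snoc:
  "ctrl_term e A B (bs @ [b]) =
     (if b then msc (signb (e (length bs))) (B (length bs) ** ctrl_term e A B bs)
      else ctrl_term e A B bs ** A (length bs))"
proof -
  define n where "n = length bs"
  have B_list: "[B j. j \<leftarrow> [0..<Suc n], (bs @ [b]) ! j]
      = [B j. j \<leftarrow> [0..<n], bs ! j] @ (if b then [B n] else [])"
    by (simp add: n_def nth_append) (intro arg_cong[where f = concat] map_cong; simp)
  have A_list: "[A j. j \<leftarrow> [0..<Suc n], \<not> (bs @ [b]) ! j]
      = [A j. j \<leftarrow> [0..<n], \<not> bs ! j] @ (if b then [] else [A n])"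
    by (simp add: n_def nth_append) (intro arg_cong[where f = concat] map_cong; simp)
  have "(\<Sum>j<n. of_bool (e j \<and> (bs @ [b]) ! j)) = (\<Sum>j<n. of_bool (e j \<and> bs ! j) :: nat)"
    by (intro sum.cong) (auto simp: n_def nth_append)
  then have count: "(\<Sum>j<Suc n. of_bool (e j \<and> (bs @ [b]) ! j))
      = (\<Sum>j<n. of_bool (e j \<and> bs ! j)) + (of_bool (e n \<and> b) :: nat)"
    by (simp add: n_def nth_append)
  show ?thesis
    unfolding ctrl_term_def n_def[symmetric] length_append_singleton B_list A_list count
    by (cases b; cases "e n") (simp_all add: signb_def matrix_mul_assoc power_add)
qed

lemma bool_lists_length_Suc:
  "{bs :: bool list. length bs = Suc n} = (\<lambda>(bs, b). bs @ [b]) ` ({bs. length bs = n} \<times> UNIV)"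
  by (auto simp: image_iff length_Suc_conv_rev)

lemma ctrl_step_sum:
  "ctrl_step e A B (\<Sum>x\<in>S. f x) = (\<Sum>x\<in>S. f x ** A + msc (signb e) (B ** f x))"
  by (simp add: ctrl_step_def sum.distrib sum_matrix_mult matrix_mult_sum msc_sum)

lemma ctrl_chain_eq_sum:
  "ctrl_chain e A B n = (\<Sum>bs\<in>{bs. length bs = n}. ctrl_term e A B bs)"
proof (induction n)
  case 0
  then show ?case by (simp add: ctrl_term_def)
next
  case (Suc n)
  have inj: "inj_on (\<lambda>(bs, b :: bool). bs @ [b]) X" for X
    by (auto simp: inj_on_def)
  have "(\<Sum>bs\<in>{bs. length bs = Suc n}. ctrl_term e A B bs)
      = (\<Sum>bs\<in>{bs. length bs = n}. \<Sum>b\<in>UNIV. ctrl_term e A B (bs @ [b]))"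
    unfolding bool_lists_length_Suc sum.reindex[OF inj] sum.cartesian_product
    by (simp add: case_prod_unfold)
  also have "\<dots> = (\<Sum>bs\<in>{bs. length bs = n}.
      ctrl_term e A B bs ** A n + msc (signb (e n)) (B n ** ctrl_term e A B bs))"
    by (intro sum.cong) (auto simp: UNIV_bool ctrl_term_snoc add.commute)
  finally show ?case
    by (simp add: Suc ctrl_step_sum)
qed

definition ctrl_sign :: "bool list \<Rightarrow> nat \<Rightarrow> bool" where
  "ctrl_sign mu j \<longleftrightarrow> 0 < j \<and> mu ! (j - 1)"

lemma ctrl_tensor_eq_ctrl_chain:
  "ctrl_tensor U Ot mu ns =
     ctrl_chain (ctrl_sign mu) (\<lambda>j. htil U (ns ! j)) (\<lambda>j. hbar U Ot (ns ! j)) (length ns)"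
proof -
  have "(\<Sum>j<length ns - 1. of_bool (mu ! j \<and> bs ! (j + 1)))
      = (\<Sum>j<length ns. of_bool ((0 < j \<and> mu ! (j - 1)) \<and> bs ! j) :: nat)" for bs
    by (cases "length ns") (simp_all only: sum.lessThan_Suc_shift, simp_all)
  then show ?thesis
    unfolding ctrl_chain_eq_sum ctrl_tensor_def ctrl_term_def ctrl_sign_def
    by (intro sum.cong) auto
qed

lemma ctrl_step_msc: "ctrl_step e A B (msc c X) = msc c (ctrl_step e A B X)"
  by (simp add: ctrl_step_def msc_add mult.commute)

lemma ctrl_step_triple:
  assumes "A ** A = mat 1" and "B ** B = mat 1"
  shows "ctrl_step e\<^sub>3 A B (ctrl_step e\<^sub>2 A B (ctrl_step e\<^sub>1 A B X))
    = msc (triple_factor e\<^sub>1 e\<^sub>2 e\<^sub>3) (ctrl_step e\<^sub>1 A B X)"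
proof -
  have BBY: "B ** (B ** Y) = Y" for Y
    using assms(2) by (simp add: matrix_mul_assoc)
  have YAA: "Y ** (A ** A) = Y" for Y
    using assms(1) by simp
  show ?thesis
    unfolding ctrl_step_def
    by (simp only: matrix_add_ldistrib matrix_add_rdistrib msc_add msc_mult_left msc_mult_right
        matrix_mul_assoc[symmetric] YAA BBY msc_msc)
      (cases e\<^sub>1; cases e\<^sub>2; cases e\<^sub>3; simp add: triple_factor_def signb_def vec_eq_iff msc_def algebra_simps)
qed

lemma ctrl_chain_cong:
  assumes "\<And>j. j < n \<Longrightarrow> e j = e' j \<and> A j = A' j \<and> B j = B' j"
  shows "ctrl_chain e A B n = ctrl_chain e' A' B' n"
  using assms by (induction n) auto

definition seq_del2 :: "nat \<Rightarrow> (nat \<Rightarrow> 'a) \<Rightarrow> nat \<Rightarrow> 'a" where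
  "seq_del2 p f j = (if j \<le> p then f j else f (j + 2))"

lemma seq_del2_le [simp]: "j \<le> p \<Longrightarrow> seq_del2 p f j = f j"
  by (simp add: seq_del2_def)

lemma seq_del2_gt [simp]: "p < j \<Longrightarrow> seq_del2 p f j = f (j + 2)"
  by (simp add: seq_del2_def)

lemma ctrl_chain_collapse_streak:
  assumes A_streak: "A (Suc p) = A p" "A (Suc (Suc p)) = A p"
    and B_streak: "B (Suc p) = B p" "B (Suc (Suc p)) = B p"
    and "A p ** A p = mat 1" and "B p ** B p = mat 1"
  shows "ctrl_chain e A B (p + 3 + d) =
    msc (triple_factor (e p) (e (p + 1)) (e (p + 2)))
      (ctrl_chain (seq_del2 p e) (seq_del2 p A) (seq_del2 p B) (p + 1 + d))"
proof (induction d)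
  case 0
  have "ctrl_chain (seq_del2 p e) (seq_del2 p A) (seq_del2 p B) p = ctrl_chain e A B p"
    by (rule ctrl_chain_cong) simp
  then show ?case
    using ctrl_step_triple[OF assms(5,6)]
    by (simp add: numeral_3_eq_3 numeral_2_eq_2 A_streak B_streak)
next
  case (Suc d)
  have "ctrl_chain e A B (p + 3 + Suc d)
      = ctrl_step (e (p + 3 + d)) (A (p + 3 + d)) (B (p + 3 + d)) (ctrl_chain e A B (p + 3 + d))"
    "ctrl_chain (seq_del2 p e) (seq_del2 p A) (seq_del2 p B) (p + 1 + Suc d)
      = ctrl_step (e (p + 3 + d)) (A (p + 3 + d)) (B (p + 3 + d))
          (ctrl_chain (seq_del2 p e) (seq_del2 p A) (seq_del2 p B) (p + 1 + d))"
    by (simp_all only: add_Suc_right ctrl_chain.simps) (simp add: numeral_3_eq_3)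
  then show ?case
    using Suc.IH by (simp only: ctrl_step_msc)
qed

lemma del2_length: "2 \<le> i \<Longrightarrow> i \<le> length xs \<Longrightarrow> length (del2 i xs) = length xs - 2"
  by (simp add: del2_def)

lemma del2_nth:
  assumes "2 \<le> i" and "i \<le> length xs" and "j < length xs - 2"
  shows "del2 i xs ! j = xs ! (if j < i - 2 then j else j + 2)"
  using assms by (auto simp: del2_def nth_append min_def)

lemma sigz_involution: "sigz ** sigz = mat 1"
  by (simp add: sigz_def matrix_matrix_mult_def mat_def vec_eq_iff sum_2 forall_2)

lemma htil_involution:
  assumes "unitary2 (U n)"
  shows "htil U n ** htil U n = mat 1"
  using conj_involution[OF _ sigz_involution, of "U n" "adj (U n)"] assms
  by (simp add: htil_def unitary2_def)

lemma hbar_involution: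
  assumes "unitary2 (U n)" and "unitary2 Ot"
  shows "hbar U Ot n ** hbar U Ot n = mat 1"
proof -
  have "invertible Ot"
    using assms(2) unfolding unitary2_def invertible_def by blast
  then show ?thesis
    using conj_involution[OF matrix_inv_right htil_involution[of U n, OF assms(1)]]
    by (simp add: hbar_def matrix_mul_lneg matrix_mul_rneg matrix_inv_left)
qed

lemma ctrl_tensor_collapse_streak:
  assumes len: "p + 3 \<le> length ns" and len_mu: "length mu = length ns - 1"
    and streak: "ns ! Suc p = ns ! p" "ns ! Suc (Suc p) = ns ! p"
    and "unitary2 (U (ns ! p))" and "unitary2 Ot"
  shows "ctrl_tensor U Ot mu ns =
    msc (triple_factor (ctrl_sign mu p) (ctrl_sign mu (p + 1)) (ctrl_sign mu (p + 2)))
      (ctrl_tensor U Ot (del2 (p + 2) mu) (del2 (p + 2) ns))"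
proof -
  define d where "d = length ns - p - 3"
  define A where "A = (\<lambda>j. htil U (ns ! j))"
  define B where "B = (\<lambda>j. hbar U Ot (ns ! j))"
  have len_eq: "length ns = p + 3 + d" and len_del2: "length (del2 (p + 2) ns) = p + 1 + d"
    using len by (simp_all add: d_def del2_length)
  have sign_del2: "ctrl_sign (del2 (p + 2) mu) j = seq_del2 p (ctrl_sign mu) j" if "j < p + 1 + d" for j
    using that len_eq len_mu del2_nth[of "p + 2" mu "j - 1"] by (auto simp: ctrl_sign_def seq_del2_def)
  have ns_del2: "del2 (p + 2) ns ! j = ns ! (if j \<le> p then j else j + 2)" if "j < p + 1 + d" for j
    using that len_eq streak del2_nth[of "p + 2" ns j] by auto
  have "ctrl_tensor U Ot (del2 (p + 2) mu) (del2 (p + 2) ns)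
      = ctrl_chain (seq_del2 p (ctrl_sign mu)) (seq_del2 p A) (seq_del2 p B) (p + 1 + d)"
    unfolding ctrl_tensor_eq_ctrl_chain len_del2
    by (rule ctrl_chain_cong) (use sign_del2 ns_del2 in \<open>auto simp: A_def B_def seq_del2_def\<close>)
  moreover have "ctrl_tensor U Ot mu ns = ctrl_chain (ctrl_sign mu) A B (p + 3 + d)"
    unfolding ctrl_tensor_eq_ctrl_chain len_eq A_def B_def ..
  moreover have "A p ** A p = mat 1" "B p ** B p = mat 1"
    using htil_involution hbar_involution assms(5,6) unfolding A_def B_def by blast+
  ultimately show ?thesis
    using ctrl_chain_collapse_streak[of A p B] streak unfolding A_def B_def by simp
qed

theorem proposition1:
  fixes k i :: nat and mu :: "bool list"
  assumes "3 \<le> k" and "2 \<le> i" and "i \<le> k - 1" and "length mu = k - 1"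
  shows "\<exists>c::complex. \<forall>(L::nat) (U::nat \<Rightarrow> qmat) (Ot::qmat) (ns::nat list).
     L \<ge> 1 \<and> (\<forall>n\<in>{1..L}. unitary2 (U n)) \<and> hermitian2 Ot \<and> unitary2 Ot \<and>
     length ns = k \<and> window_string L ns \<and>
     ns ! (i - 2) = ns ! (i - 1) \<and> ns ! (i - 1) = ns ! i
     \<longrightarrow> ctrl_tensor U Ot mu ns = msc c (ctrl_tensor U Ot (del2 i mu) (del2 i ns))"
proof -
  define p where "p = i - 2"
  have i: "i = p + 2" "i - 1 = Suc p"
    using assms(2) unfolding p_def by auto
  show ?thesis
  proof (intro exI allI impI, elim conjE)
    fix L U Ot ns
    assume "\<forall>n\<in>{1..L}. unitary2 (U n)" "unitary2 Ot" "length ns = k" "window_string L ns"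
      "ns ! (i - 2) = ns ! (i - 1)" "ns ! (i - 1) = ns ! i"
    moreover have "ns ! p \<in> set ns"
      using assms \<open>length ns = k\<close> unfolding p_def by simp
    ultimately show "ctrl_tensor U Ot mu ns =
      msc (triple_factor (ctrl_sign mu p) (ctrl_sign mu (p + 1)) (ctrl_sign mu (p + 2)))
        (ctrl_tensor U Ot (del2 i mu) (del2 i ns))"
      using assms ctrl_tensor_collapse_streak[of p ns mu U Ot] unfolding i window_string_def
      by (auto simp: p_def)
  qed
qed

end
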